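(* Let $\mathbf{X}$ be a Euclidean space, let $M, Q \subset \mathbf{X}$ be nonempty closed sets, and let $\bar x \in M \cap Q$. Suppose that $Q$ intersects $M$ separably at $\bar x$, and that $Q$ is prox-regular at $\bar x$. Let $\Phi \colon \mathbf{X} \to \mathbf{X}$ be an inexact projection onto $M$ around $\bar x$. Then for every starting point $z^0 \in Q$ sufficiently close to $\bar x$, the inexact alternating projection iteration \[ z^{k+1} = P_Q\big(\Phi(z^k)\big), \qquad k = 0,1,2,\ldots \] converges linearly to a point in the intersection $M \cap Q$.
   Context: For a nonempty closed set $S \subset \mathbf{X}$, $d_S(z) = \min\{|x-z| : x \in S\}$ is the distance function and $P_S(z)$ is the (possibly multivalued) set of nearest points of $S$ to $z$. The set $Q$ is prox-regular at $\bar x \in Q$ if $P_Q$ is single-valued on a neighborhood of $\bar x$ (so the iteration is well defined near $\bar x$). The set $Q$ intersects $M$ separably at $\bar x \in M \cap Q$ if there exists an angle $\alpha>0$ such that, for any point $z \in Q\setminus M$ sufficiently close to $\bar x$ and any points $x \in P_M(z)\setminus Q$ and $z' \in P_Q(x)$, the angle between the vectors $z-x$ and $z'-x$ is at least $\alpha$. A map $\Phi\colon \mathbf{X}\to\mathbf{X}$ is an inexact projection onto $M$ around $\bar x \in M$ if $d_{P_M(z)}(\Phi(z)) = o(d_M(z))$ as $z \to \bar x$. A sequence $(z^k)$ converges linearly to $\hat z$ if there exist constants $c \in (0,1)$ and $\rho>0$ with $|z^k - \hat z| < \rho c^k$ for all $k$. *)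

theory Defs
  imports "HOL-Analysis.Analysis" "HOL-Library.Landau_Symbols"
begin

definition proj_set :: "'a::euclidean_space set \<Rightarrow> 'a \<Rightarrow> 'a set" where
  "proj_set S z = {x \<in> S. \<forall>y\<in>S. norm (x - z) \<le> norm (y - z)}"

definition vangle :: "'a::euclidean_space \<Rightarrow> 'a \<Rightarrow> real" where
  "vangle u v = arccos ((u \<bullet> v) / (norm u * norm v))"

definition prox_regular_at :: "'a::euclidean_space set \<Rightarrow> 'a \<Rightarrow> bool" where
  "prox_regular_at Q xbar \<longleftrightarrow> xbar \<in> Q \<and>
     (\<exists>\<epsilon>>0. \<forall>z\<in>ball xbar \<epsilon>. \<exists>!x. x \<in> proj_set Q z)"

definition intersects_separably :: "'a::euclidean_space set \<Rightarrow> 'a set \<Rightarrow> 'a \<Rightarrow> bool" where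
  "intersects_separably Q M xbar \<longleftrightarrow> xbar \<in> M \<inter> Q \<and>
     (\<exists>\<alpha>>0. \<exists>\<delta>>0. \<forall>z \<in> Q - M. norm (z - xbar) < \<delta> \<longrightarrow>
        (\<forall>x \<in> proj_set M z - Q. \<forall>z' \<in> proj_set Q x. vangle (z - x) (z' - x) \<ge> \<alpha>))"

definition inexact_projection :: "('a::euclidean_space \<Rightarrow> 'a) \<Rightarrow> 'a set \<Rightarrow> 'a \<Rightarrow> bool" where
  "inexact_projection \<Phi> M xbar \<longleftrightarrow> xbar \<in> M \<and>
     (\<lambda>z. infdist (\<Phi> z) (proj_set M z)) \<in> o[nhds xbar](\<lambda>z. infdist z M)"

definition converges_linearly :: "(nat \<Rightarrow> 'a::real_normed_vector) \<Rightarrow> 'a \<Rightarrow> bool" where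
  "converges_linearly z zhat \<longleftrightarrow>
     (\<exists>c \<rho>. 0 < c \<and> c < 1 \<and> \<rho> > 0 \<and> (\<forall>k. norm (z k - zhat) < \<rho> * c ^ k))"

end

theory Submission
  imports Defs
begin

text \<open>Prox-regularity makes the projection onto Q single-valued, hence continuous, near xbar.
  A Brouwer fixed point argument then shows that every proximal normal at a point q of Q near xbar
  extends to a uniform length r, which yields the proximal normal inequality
  (x - q) \<bullet> (z - q) \<le> |x - q| |z - q|^2 / (2 r) for q \<in> P_Q(x) and z \<in> Q.
  Together with the angle bound of separable intersection this gives, for z \<in> Q and x \<in> P_M(z),
  d_Q(x) \<le> c d_M(z) with a constant c < 1. An inexact projection perturbs x only by o(d_M(z)),
  so along the iteration d_M decreases geometrically while every step is at most 2 d_M; the iterates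
  therefore form a Cauchy sequence converging linearly to a point of M \<inter> Q.\<close>

section \<open>Nearest points\<close>

lemma proj_set_iff: "x \<in> proj_set S z \<longleftrightarrow> x \<in> S \<and> norm (x - z) \<le> infdist z S"
proof
  assume x: "x \<in> proj_set S z"
  then have "x \<in> S" by (simp add: proj_set_def)
  moreover have "norm (x - z) \<le> infdist z S"
    using x \<open>x \<in> S\<close> by (subst infdist_notempty)
      (auto intro!: cINF_greatest simp: proj_set_def dist_norm norm_minus_commute)
  ultimately show "x \<in> S \<and> norm (x - z) \<le> infdist z S" by simp
next
  assume "x \<in> S \<and> norm (x - z) \<le> infdist z S"
  then show "x \<in> proj_set S z"
    unfolding proj_set_def using infdist_le[of _ S z]
    by (auto simp: dist_norm norm_minus_commute intro: order_trans)
qed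

lemma norm_proj_set: "x \<in> proj_set S z \<Longrightarrow> norm (x - z) = infdist z S"
  using infdist_le[of x S z] by (simp add: proj_set_iff dist_norm norm_minus_commute)

lemma proj_set_subset: "proj_set S z \<subseteq> S"
  by (auto simp: proj_set_def)

lemma proj_set_nonempty:
  fixes S :: "'a::euclidean_space set"
  assumes "closed S" "S \<noteq> {}"
  shows "proj_set S z \<noteq> {}"
proof -
  obtain x where "x \<in> S" "\<And>y. y \<in> S \<Longrightarrow> dist z x \<le> dist z y"
    using distance_attains_inf[OF assms] by blast
  then have "x \<in> proj_set S z" by (auto simp: proj_set_def dist_norm norm_minus_commute)
  then show ?thesis by blast
qed

lemma closed_proj_set:
  assumes "closed S"
  shows "closed (proj_set S z)"
proof -
  have "proj_set S z = S \<inter> {x. norm (x - z) \<le> infdist z S}"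
    by (auto simp: proj_set_iff)
  then show ?thesis
    using assms by (simp add: closed_Int closed_Collect_le continuous_intros)
qed

lemma proj_set_segment:
  assumes q: "q \<in> proj_set S w" and s: "0 \<le> s" "s \<le> 1"
  shows "q \<in> proj_set S (q + s *\<^sub>R (w - q))"
proof -
  let ?y = "q + s *\<^sub>R (w - q)"
  have "norm (q - ?y) \<le> norm (p - ?y)" if p: "p \<in> S" for p
  proof -
    have "w - ?y = (1 - s) *\<^sub>R (w - q)" by (simp add: algebra_simps)
    then have "norm (w - ?y) = (1 - s) * norm (w - q)" using s by simp
    moreover have "norm (q - w) \<le> norm (p - w)" using q p by (simp add: proj_set_def)
    moreover have "norm (p - w) \<le> norm (p - ?y) + norm (w - ?y)"
      using norm_triangle_ineq4[of "p - ?y" "w - ?y"] by simp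
    moreover have "norm (q - ?y) = s * norm (w - q)" using s by (simp add: norm_minus_commute)
    ultimately show ?thesis by (simp add: norm_minus_commute algebra_simps)
  qed
  then show ?thesis using q by (simp add: proj_set_def)
qed

lemma norm_proj_set_perturbed:
  assumes "z1 \<in> proj_set Q y"
  shows "norm (z1 - x) \<le> infdist x Q + 2 * norm (y - x)"
proof -
  have "norm (z1 - x) \<le> norm (z1 - y) + norm (y - x)"
    using norm_triangle_ineq[of "z1 - y" "y - x"] by simp
  also have "norm (z1 - y) = infdist y Q" using norm_proj_set[OF assms] .
  also have "infdist y Q \<le> infdist x Q + norm (y - x)"
    using infdist_triangle[of y Q x] by (simp add: dist_norm)
  finally show ?thesis by simp
qed

\<comment> \<open>Meaningful only where the nearest point is unique; elsewhere THE returns an arbitrary value.\<close>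
definition proj_point :: "'a::euclidean_space set \<Rightarrow> 'a \<Rightarrow> 'a" where
  "proj_point S w = (THE x. x \<in> proj_set S w)"

lemma proj_point_in_proj_set: "\<exists>!x. x \<in> proj_set S w \<Longrightarrow> proj_point S w \<in> proj_set S w"
  unfolding proj_point_def by (rule theI')

lemma proj_point_eq: "\<exists>!x. x \<in> proj_set S w \<Longrightarrow> x \<in> proj_set S w \<Longrightarrow> proj_point S w = x"
  unfolding proj_point_def by (rule the1_equality)

lemma closed_graph_proj_point:
  fixes Q :: "'a::euclidean_space set"
  assumes K: "closed K" and Q: "closed Q" and uniq: "\<forall>w\<in>K. \<exists>!x. x \<in> proj_set Q w"
  shows "closed ((\<lambda>w. (w, proj_point Q w)) ` K)"
proof -
  let ?G = "(K \<times> Q) \<inter> {p. norm (snd p - fst p) \<le> infdist (fst p) Q}"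
  have "(\<lambda>w. (w, proj_point Q w)) ` K = ?G"
  proof (intro equalityI subsetI)
    fix p assume "p \<in> (\<lambda>w. (w, proj_point Q w)) ` K"
    then obtain w where w: "w \<in> K" and p: "p = (w, proj_point Q w)" by blast
    have "proj_point Q w \<in> proj_set Q w" using uniq w by (simp add: proj_point_in_proj_set)
    then show "p \<in> ?G" using w p by (simp add: proj_set_iff)
  next
    fix p assume "p \<in> ?G"
    then obtain w x where w: "w \<in> K" and x: "x \<in> proj_set Q w" and p: "p = (w, x)"
      by (cases p) (auto simp: proj_set_iff)
    have "proj_point Q w = x" using uniq w x by (simp add: proj_point_eq)
    then show "p \<in> (\<lambda>w. (w, proj_point Q w)) ` K" using w p by blast
  qed
  also have "closed \<dots>"
    by (intro closed_Int closed_Times closed_Collect_le continuous_intros K Q)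
  finally show ?thesis .
qed

lemma continuous_on_proj_point:
  fixes Q :: "'a::euclidean_space set"
  assumes K: "compact K" and Q: "closed Q" and uniq: "\<forall>w\<in>K. \<exists>!x. x \<in> proj_set Q w"
  shows "continuous_on K (proj_point Q)"
proof (cases "K = {}")
  case False
  then obtain w0 where "w0 \<in> K" by blast
  define q0 where "q0 = proj_point Q w0"
  have q0: "q0 \<in> Q"
    using proj_point_in_proj_set uniq \<open>w0 \<in> K\<close> proj_set_subset unfolding q0_def by blast
  obtain B where B: "\<And>w. w \<in> K \<Longrightarrow> norm w \<le> B"
    using compact_imp_bounded[OF K] by (auto simp: bounded_iff)
  show ?thesis
  proof (rule continuous_from_closed_graph)
    show "compact (cball (0::'a) (2 * B + norm q0))" by simp
    show "proj_point Q \<in> K \<rightarrow> cball 0 (2 * B + norm q0)"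
    proof
      fix w assume w: "w \<in> K"
      have "norm (proj_point Q w - w) = infdist w Q"
        using norm_proj_set proj_point_in_proj_set uniq w by blast
      also have "\<dots> \<le> norm w + norm q0"
        using infdist_le[OF q0, of w] norm_triangle_ineq4[of w q0] by (simp add: dist_norm)
      finally have "norm (proj_point Q w) \<le> 2 * norm w + norm q0"
        using norm_triangle_ineq2[of "proj_point Q w" w] by simp
      then show "proj_point Q w \<in> cball 0 (2 * B + norm q0)" using B[OF w] by simp
    qed
    show "closed ((\<lambda>w. (w, proj_point Q w)) ` K)"
      using closed_graph_proj_point[OF compact_imp_closed[OF K] Q uniq] .
  qed
qed simp

section \<open>Proximal normals of prox-regular sets\<close>

lemma proj_set_ray_step:
  fixes Q :: "'a::euclidean_space set"
  assumes Q: "closed Q" and uniq: "\<forall>w\<in>cball y \<delta>. \<exists>!x. x \<in> proj_set Q w"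
    and y: "y = q + T *\<^sub>R u" and u: "norm u = 1" and q: "q \<in> proj_set Q y"
    and \<delta>: "0 < \<delta>" "2 * \<delta> \<le> T"
  shows "q \<in> proj_set Q (q + (T + \<delta>) *\<^sub>R u)"
proof -
  let ?p = "proj_point Q" and ?C = "cball y \<delta>"
  have p: "?p w \<in> proj_set Q w" if "w \<in> ?C" for w
    using uniq that by (simp add: proj_point_in_proj_set)
  have dy: "infdist y Q = T"
    using norm_proj_set[OF q] y u \<delta> by simp
  have far: "\<delta> \<le> norm (w - ?p w)" if w: "w \<in> ?C" for w
  proof -
    have "infdist y Q \<le> infdist w Q + dist y w" by (rule infdist_triangle)
    then show ?thesis
      using w dy \<delta> norm_proj_set[OF p[OF w]] by (simp add: norm_minus_commute)
  qed
  define f where "f w = y + \<delta> *\<^sub>R sgn (w - ?p w)" for w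
  have "continuous_on ?C ?p"
    using Q uniq by (intro continuous_on_proj_point) auto
  then have "continuous_on ?C f"
    unfolding f_def using far \<delta> by (intro continuous_intros) force+
  moreover have "f \<in> ?C \<rightarrow> ?C"
    using far \<delta> by (auto simp: f_def dist_norm norm_sgn)
  ultimately obtain w where w: "w \<in> ?C" and fw: "f w = w"
    using brouwer[of ?C f] \<delta> by auto
  \<comment> \<open>f pushes each point of the ball to its boundary, away from its projection. A fixed point w
    therefore lies on the ray from its projection through y, so by uniqueness that projection is q
    and w = q + (T + \<delta>) u.\<close>
  define d where "d = norm (w - ?p w)"
  define e where "e = sgn (w - ?p w)"
  have d: "\<delta> \<le> d" using far[OF w] by (simp add: d_def)
  have "0 < d" using d \<delta> by simp
  then have e: "norm e = 1" and we: "w - ?p w = d *\<^sub>R e"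
    by (simp_all add: e_def d_def norm_sgn sgn_div_norm)
  have wy: "w = y + \<delta> *\<^sub>R e" using fw by (simp add: f_def e_def)
  have "?p w + (1 - \<delta> / d) *\<^sub>R (w - ?p w) = w - (\<delta> / d) *\<^sub>R (w - ?p w)"
    by (simp add: algebra_simps)
  also have "\<dots> = w - \<delta> *\<^sub>R e"
    using \<open>0 < d\<close> by (simp add: we)
  also have "\<dots> = y"
    using wy by simp
  finally have "?p w \<in> proj_set Q y"
    using proj_set_segment[OF p[OF w], of "1 - \<delta> / d"] d \<delta> by simp
  then have pq: "?p w = q"
    using proj_point_eq[of Q y] uniq q \<delta> by (metis centre_in_cball less_imp_le)
  have de: "(d - \<delta>) *\<^sub>R e = T *\<^sub>R u"
    using we wy y pq by (simp add: algebra_simps)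
  have "\<bar>d - \<delta>\<bar> = \<bar>T\<bar>"
    using arg_cong[OF de, of norm] e u by (simp only: norm_scaleR) simp
  then have "d - \<delta> = T"
    using d \<delta> by simp
  with de have "e = u" using \<delta> by simp
  then have "w = q + (T + \<delta>) *\<^sub>R u" using wy y by (simp add: algebra_simps)
  then show ?thesis using p[OF w] pq by simp
qed

lemma proj_set_ray_extend:
  fixes Q :: "'a::euclidean_space set"
  assumes Q: "closed Q" and uniq: "\<forall>w\<in>ball xb (2 * r). \<exists>!x. x \<in> proj_set Q w"
    and q: "norm (q - xb) < r" "q \<in> proj_set Q (q + t *\<^sub>R u)" and t: "0 < t" and u: "norm u = 1"
  shows "q \<in> proj_set Q (q + r *\<^sub>R u)"
proof -
  define S where "S = {s \<in> {0..r}. q \<in> proj_set Q (q + s *\<^sub>R u)}"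
  have "0 < r" using q(1) by (meson norm_ge_zero le_less_trans)
  have qQ: "q \<in> Q" using q(2) proj_set_subset by blast
  have "q \<in> proj_set Q (q + s *\<^sub>R u)" if "0 \<le> s" "s \<le> t" for s
  proof -
    have "q + (s / t) *\<^sub>R ((q + t *\<^sub>R u) - q) = q + s *\<^sub>R u" using t by simp
    then show ?thesis using proj_set_segment[OF q(2), of "s / t"] that t by simp
  qed
  then have "min t r \<in> S"
    using t \<open>0 < r\<close> by (simp add: S_def)
  have bdd: "bdd_above S" by (auto simp: S_def bdd_above_def)
  have "S = {0..r} \<inter> {s. norm (q - (q + s *\<^sub>R u)) \<le> infdist (q + s *\<^sub>R u) Q}"
    using qQ by (auto simp: S_def proj_set_iff)
  then have "closed S" by (simp add: closed_Int closed_Collect_le continuous_intros)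
  define T where "T = Sup S"
  have TS: "T \<in> S" unfolding T_def
    using closed_contains_Sup[OF _ bdd \<open>closed S\<close>] \<open>min t r \<in> S\<close> by blast
  have "0 < T" "T \<le> r"
    using cSup_upper[OF \<open>min t r \<in> S\<close> bdd] t \<open>0 < r\<close> TS by (auto simp: T_def S_def)
  have "T = r"
  proof (rule ccontr)
    assume "T \<noteq> r"
    define \<delta> where "\<delta> = min (T / 2) (r - T)"
    have \<delta>: "0 < \<delta>" "2 * \<delta> \<le> T" "\<delta> \<le> r - T"
      using \<open>0 < T\<close> \<open>T \<le> r\<close> \<open>T \<noteq> r\<close> by (auto simp: \<delta>_def min_def)
    have "cball (q + T *\<^sub>R u) \<delta> \<subseteq> ball xb (2 * r)"
    proof
      fix w assume "w \<in> cball (q + T *\<^sub>R u) \<delta>"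
      then have "norm (w - xb) \<le> \<delta> + T + norm (q - xb)"
        using norm_triangle_ineq[of "w - (q + T *\<^sub>R u)" "q + T *\<^sub>R u - xb"]
          norm_triangle_ineq[of "T *\<^sub>R u" "q - xb"] u \<open>0 < T\<close>
        by (simp add: dist_norm norm_minus_commute algebra_simps)
      then show "w \<in> ball xb (2 * r)" using \<delta> q(1) by (simp add: dist_norm norm_minus_commute)
    qed
    then have "q \<in> proj_set Q (q + (T + \<delta>) *\<^sub>R u)"
      using TS uniq by (intro proj_set_ray_step[OF Q _ refl u _ \<delta>(1,2)]) (auto simp: S_def)
    then have "T + \<delta> \<in> S" using \<delta> \<open>0 < T\<close> by (simp add: S_def)
    then have "T + \<delta> \<le> T" using cSup_upper[OF _ bdd] by (simp only: T_def)
    then show False using \<delta>(1) by simp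
  qed
  then show ?thesis using TS by (simp add: S_def)
qed

lemma proj_set_ball_inner_le:
  assumes q: "q \<in> proj_set Q (q + r *\<^sub>R u)" and u: "norm u = 1" and z: "z \<in> Q"
  shows "2 * r * ((z - q) \<bullet> u) \<le> (norm (z - q))\<^sup>2"
proof -
  have "\<bar>r\<bar> \<le> norm ((z - q) - r *\<^sub>R u)"
    using q z u by (simp add: proj_set_def algebra_simps)
  then have "r\<^sup>2 \<le> (norm ((z - q) - r *\<^sub>R u))\<^sup>2"
    by (metis abs_ge_zero power2_abs power_mono)
  also have "\<dots> = (norm (z - q))\<^sup>2 - 2 * r * ((z - q) \<bullet> u) + r\<^sup>2"
    using dot_norm_neg[of "z - q" "r *\<^sub>R u"] u by (simp add: power_mult_distrib)
  finally show ?thesis by simp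
qed

lemma proj_set_proximal_normal_ineq:
  fixes Q :: "'a::euclidean_space set"
  assumes Q: "closed Q" and uniq: "\<forall>w\<in>ball xb (2 * r). \<exists>!x. x \<in> proj_set Q w"
    and q: "norm (q - xb) < r" "q \<in> proj_set Q x" and z: "z \<in> Q"
  shows "(x - q) \<bullet> (z - q) \<le> norm (x - q) * (norm (z - q))\<^sup>2 / (2 * r)"
proof (cases "x = q")
  case False
  define t where "t = norm (x - q)"
  define u where "u = sgn (x - q)"
  have t: "0 < t" and u: "norm u = 1" and x: "x = q + t *\<^sub>R u"
    using False by (auto simp: t_def u_def norm_sgn sgn_div_norm)
  have "q \<in> proj_set Q (q + r *\<^sub>R u)"
    using proj_set_ray_extend[OF Q uniq q(1) _ t u] q(2) x by simp
  from proj_set_ball_inner_le[OF this u z]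
  have "2 * r * ((z - q) \<bullet> u) \<le> (norm (z - q))\<^sup>2" .
  moreover have "0 < r" using q(1) by (meson norm_ge_zero le_less_trans)
  ultimately have "(z - q) \<bullet> u \<le> (norm (z - q))\<^sup>2 / (2 * r)"
    by (simp add: field_simps)
  then have "t * ((z - q) \<bullet> u) \<le> t * ((norm (z - q))\<^sup>2 / (2 * r))"
    using t by (intro mult_left_mono) auto
  moreover have "(x - q) \<bullet> (z - q) = t * ((z - q) \<bullet> u)"
    by (simp add: x inner_commute)
  ultimately show ?thesis by (simp add: t_def)
qed simp

section \<open>One step of the inexact alternating projection\<close>

lemma vangle_ge_imp_inner_le:
  assumes "0 < \<alpha>"
  obtains C where "0 \<le> C" "C < 1"
    "\<And>u v :: 'a::euclidean_space. u \<noteq> 0 \<Longrightarrow> v \<noteq> 0 \<Longrightarrow> \<alpha> \<le> vangle u v \<Longrightarrow> u \<bullet> v \<le> C * norm u * norm v"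
proof
  let ?\<beta> = "min \<alpha> pi"
  have "cos ?\<beta> < cos 0"
    using assms by (intro cos_monotone_0_pi) (auto simp: min_def)
  then show "max (cos ?\<beta>) 0 < 1" by simp
  show "0 \<le> max (cos ?\<beta>) 0" by simp
  fix u v :: 'a
  assume "u \<noteq> 0" "v \<noteq> 0" and angle: "\<alpha> \<le> vangle u v"
  define c where "c = (u \<bullet> v) / (norm u * norm v)"
  have uv: "0 < norm u * norm v" using \<open>u \<noteq> 0\<close> \<open>v \<noteq> 0\<close> by simp
  have "\<bar>u \<bullet> v\<bar> \<le> norm u * norm v" by (rule Cauchy_Schwarz_ineq2)
  then have c: "-1 \<le> c" "c \<le> 1" using uv by (auto simp: c_def field_simps abs_le_iff)
  have "cos (arccos c) \<le> cos ?\<beta>"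
    using angle assms arccos_ubound[OF c] unfolding vangle_def c_def[symmetric]
    by (intro cos_monotone_0_pi_le) auto
  then have "c \<le> max (cos ?\<beta>) 0" using cos_arccos[OF c] by simp
  then show "u \<bullet> v \<le> max (cos ?\<beta>) 0 * norm u * norm v"
    using uv by (simp add: c_def field_simps)
qed

lemma norm_le_of_angle_and_curvature:
  fixes x z z' :: "'a::real_inner"
  assumes near: "norm (z' - x) \<le> r / 2" and "0 < r"
    and obtuse: "(z - x) \<bullet> (z' - x) \<le> C * norm (z - x) * norm (z' - x)" and C: "0 \<le> C" "C < 1"
    and curv: "(x - z') \<bullet> (z - z') \<le> norm (x - z') * (norm (z - z'))\<^sup>2 / (2 * r)"
  shows "norm (z' - x) \<le> sqrt ((1 + C) / (3 - C)) * norm (z - x)"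
proof -
  define p where "p = z - x"
  define q where "q = z' - x"
  have "x - z' = - q" "z - z' = p - q" by (simp_all add: p_def q_def)
  with curv have "(- q) \<bullet> (p - q) \<le> norm (- q) * (norm (p - q))\<^sup>2 / (2 * r)" by (simp only:)
  then have curv': "(norm q)\<^sup>2 - p \<bullet> q \<le> norm q * (norm (p - q))\<^sup>2 / (2 * r)"
    by (simp add: inner_diff_right power2_norm_eq_inner inner_commute)
  have "norm q / (2 * r) \<le> 1 / 4" using near \<open>0 < r\<close> by (simp add: q_def field_simps)
  then have "norm q * (norm (p - q))\<^sup>2 / (2 * r) \<le> (norm (p - q))\<^sup>2 / 4"
    using mult_right_mono[of "norm q / (2 * r)" "1 / 4" "(norm (p - q))\<^sup>2"] by simp
  with curv' have "(norm q)\<^sup>2 - p \<bullet> q \<le> (norm (p - q))\<^sup>2 / 4" by linarith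
  moreover have "(norm (p - q))\<^sup>2 = (norm p)\<^sup>2 + (norm q)\<^sup>2 - 2 * (p \<bullet> q)"
    using dot_norm_neg[of p q] by simp
  ultimately have "3 * (norm q)\<^sup>2 \<le> (norm p)\<^sup>2 + 2 * (p \<bullet> q)"
    by linarith
  also have "\<dots> \<le> (norm p)\<^sup>2 + C * (2 * norm p * norm q)"
    using obtuse by (simp add: p_def q_def)
  also have "\<dots> \<le> (norm p)\<^sup>2 + C * ((norm p)\<^sup>2 + (norm q)\<^sup>2)"
    using sum_squares_bound[of "norm p" "norm q"] C
    by (intro add_left_mono mult_left_mono) (auto simp: power2_eq_square)
  finally have "(3 - C) * (norm q)\<^sup>2 \<le> (1 + C) * (norm p)\<^sup>2"
    by (simp add: algebra_simps)
  then have "(norm q)\<^sup>2 \<le> (sqrt ((1 + C) / (3 - C)) * norm p)\<^sup>2"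
    using C by (simp add: field_simps power_mult_distrib)
  then show ?thesis
    unfolding p_def q_def by (rule power2_le_imp_le) (use C in simp)
qed

lemma proj_set_alternating_contraction:
  fixes M Q :: "'a::euclidean_space set"
  assumes Q: "closed Q" and sep: "intersects_separably Q M xbar" and prox: "prox_regular_at Q xbar"
  obtains \<delta> c where "0 < \<delta>" "0 \<le> c" "c < 1"
    "\<And>z x. z \<in> Q \<Longrightarrow> norm (z - xbar) < \<delta> \<Longrightarrow> x \<in> proj_set M z \<Longrightarrow> infdist x Q \<le> c * infdist z M"
proof -
  obtain e where e: "0 < e" and uniq: "\<forall>w\<in>ball xbar e. \<exists>!x. x \<in> proj_set Q w"
    using prox unfolding prox_regular_at_def by blast
  obtain \<alpha> \<delta>s where \<alpha>: "0 < \<alpha>" and \<delta>s: "0 < \<delta>s" and xbar: "xbar \<in> M"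
    and angle: "\<And>z x z'. z \<in> Q - M \<Longrightarrow> norm (z - xbar) < \<delta>s \<Longrightarrow> x \<in> proj_set M z - Q \<Longrightarrow>
      z' \<in> proj_set Q x \<Longrightarrow> \<alpha> \<le> vangle (z - x) (z' - x)"
    using sep unfolding intersects_separably_def by blast
  obtain C where C: "0 \<le> C" "C < 1" and inner: "\<And>u v :: 'a. u \<noteq> 0 \<Longrightarrow> v \<noteq> 0 \<Longrightarrow>
      \<alpha> \<le> vangle u v \<Longrightarrow> u \<bullet> v \<le> C * norm u * norm v"
    using vangle_ge_imp_inner_le[OF \<alpha>] by blast
  define r where "r = e / 2"
  define \<delta> where "\<delta> = min \<delta>s (r / 3)"
  define c where "c = sqrt ((1 + C) / (3 - C))"
  have "0 < r" "0 < \<delta>" using e \<delta>s by (auto simp: \<delta>_def r_def)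
  have "0 \<le> c" "c < 1" using C by (auto simp: c_def real_sqrt_lt_1_iff)
  moreover have "infdist x Q \<le> c * infdist z M"
    if z: "z \<in> Q" "norm (z - xbar) < \<delta>" and x: "x \<in> proj_set M z" for z x
  proof (cases "x \<in> Q")
    case False
    obtain z' where z': "z' \<in> proj_set Q x" using proj_set_nonempty[OF Q, of x] z by blast
    have dz: "norm (x - z) = infdist z M" using norm_proj_set[OF x] .
    have "z \<noteq> x" "z' \<noteq> x" using False z z' proj_set_subset by auto
    then have "z \<notin> M" using dz by auto
    have z'x: "norm (z' - x) \<le> norm (z - x)"
      using norm_proj_set[OF z'] infdist_le[OF z(1), of x] by (simp add: dist_norm norm_minus_commute)
    have zx: "norm (z - x) \<le> norm (z - xbar)"
      using dz infdist_le[OF xbar, of z] by (simp add: dist_norm norm_minus_commute)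
    have "\<alpha> \<le> vangle (z - x) (z' - x)"
      using angle z x z' False \<open>z \<notin> M\<close> by (simp add: \<delta>_def)
    then have obtuse: "(z - x) \<bullet> (z' - x) \<le> C * norm (z - x) * norm (z' - x)"
      using inner \<open>z \<noteq> x\<close> \<open>z' \<noteq> x\<close> by simp
    have "norm (z' - xbar) \<le> norm (z' - x) + norm (z - x) + norm (z - xbar)"
      using norm_triangle_ineq[of "z' - x" "x - z"] norm_triangle_ineq[of "z' - z" "z - xbar"]
      by (simp add: norm_minus_commute)
    then have z'near: "norm (z' - xbar) < r" using z'x zx z(2) by (simp add: \<delta>_def)
    have "\<forall>w\<in>ball xbar (2 * r). \<exists>!x. x \<in> proj_set Q w" using uniq by (simp add: r_def)
    from proj_set_proximal_normal_ineq[OF Q this z'near z' z(1)]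
    have curv: "(x - z') \<bullet> (z - z') \<le> norm (x - z') * (norm (z - z'))\<^sup>2 / (2 * r)" .
    have "norm (z' - x) \<le> r / 2" using z'x zx z(2) \<open>0 < r\<close> by (simp add: \<delta>_def)
    from norm_le_of_angle_and_curvature[OF this \<open>0 < r\<close> obtuse C curv]
    have "norm (z' - x) \<le> c * norm (z - x)" by (simp add: c_def)
    then show ?thesis using norm_proj_set[OF z'] dz by (simp add: norm_minus_commute)
  qed (use \<open>0 \<le> c\<close> in \<open>simp add: infdist_nonneg\<close>)
  ultimately show ?thesis using that \<open>0 < \<delta>\<close> by blast
qed

lemma inexact_alternating_step:
  fixes M Q :: "'a::euclidean_space set"
  assumes M: "closed M" "M \<noteq> {}" and Q: "closed Q"
    and sep: "intersects_separably Q M xbar" and prox: "prox_regular_at Q xbar"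
    and inex: "inexact_projection \<Phi> M xbar"
  obtains \<delta> c where "0 < \<delta>" "0 \<le> c" "c < 1"
    "\<And>z z1. z \<in> Q \<Longrightarrow> norm (z - xbar) < \<delta> \<Longrightarrow> z1 \<in> proj_set Q (\<Phi> z) \<Longrightarrow>
      infdist z1 M \<le> c * infdist z M \<and> norm (z1 - z) \<le> 2 * infdist z M"
proof -
  obtain \<delta>0 c0 where \<delta>0: "0 < \<delta>0" and c0: "0 \<le> c0" "c0 < 1"
    and exact: "\<And>z x. z \<in> Q \<Longrightarrow> norm (z - xbar) < \<delta>0 \<Longrightarrow> x \<in> proj_set M z \<Longrightarrow>
      infdist x Q \<le> c0 * infdist z M"
    using proj_set_alternating_contraction[OF Q sep prox] by blast
  define \<eta> where "\<eta> = (1 - c0) / 4"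
  have "0 < \<eta>" using c0 by (simp add: \<eta>_def)
  with inex have "eventually (\<lambda>z. norm (infdist (\<Phi> z) (proj_set M z)) \<le> \<eta> * norm (infdist z M)) (nhds xbar)"
    unfolding inexact_projection_def by (blast dest: landau_o.smallD)
  then obtain \<rho> where \<rho>: "0 < \<rho>"
    and small: "\<And>z. dist z xbar < \<rho> \<Longrightarrow> infdist (\<Phi> z) (proj_set M z) \<le> \<eta> * infdist z M"
    unfolding eventually_nhds_metric by (auto simp: infdist_nonneg)
  define c where "c = (1 + c0) / 2"
  have "infdist z1 M \<le> c * infdist z M \<and> norm (z1 - z) \<le> 2 * infdist z M"
    if z: "z \<in> Q" "norm (z - xbar) < min \<delta>0 \<rho>" and z1: "z1 \<in> proj_set Q (\<Phi> z)" for z z1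
  proof -
    obtain x where x: "x \<in> proj_set (proj_set M z) (\<Phi> z)"
      using proj_set_nonempty[OF closed_proj_set[OF M(1)] proj_set_nonempty[OF M]] by blast
    then have xz: "x \<in> proj_set M z" using proj_set_subset by blast
    have "norm (\<Phi> z - x) \<le> \<eta> * infdist z M"
      using norm_proj_set[OF x] small z(2) by (simp add: dist_norm norm_minus_commute)
    moreover have "infdist x Q \<le> c0 * infdist z M" using exact z xz by simp
    ultimately have "norm (z1 - x) \<le> c * infdist z M"
      using norm_proj_set_perturbed[OF z1, of x] by (simp add: c_def \<eta>_def field_simps)
    moreover have "infdist z1 M \<le> norm (z1 - x)"
      using infdist_le[of x M z1] xz proj_set_subset by (auto simp: dist_norm)
    moreover have "norm (z1 - z) \<le> norm (z1 - x) + norm (x - z)"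
      using norm_triangle_ineq[of "z1 - x" "x - z"] by simp
    moreover have "c \<le> 1" using c0 by (simp add: c_def)
    ultimately show ?thesis
      using norm_proj_set[OF xz] infdist_nonneg[of z M] mult_right_mono[of c 1 "infdist z M"]
      by auto
  qed
  moreover have "0 \<le> c" "c < 1" using c0 by (auto simp: c_def)
  ultimately show ?thesis using that[of "min \<delta>0 \<rho>" c] \<delta>0 \<rho> by auto
qed

section \<open>Linear convergence of the iterates\<close>

lemma geometric_steps_converge:
  fixes z :: "nat \<Rightarrow> 'a::banach"
  assumes steps: "\<And>k. norm (z (Suc k) - z k) \<le> a * c ^ k" and c: "0 \<le> c" "c < 1"
  obtains zhat where "z \<longlonglongrightarrow> zhat" "\<And>k. norm (z k - zhat) \<le> a / (1 - c) * c ^ k"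
proof -
  define D where "D k = z (Suc k) - z k" for k
  have "summable D"
    by (rule summable_comparison_test'[of "\<lambda>k. a * c ^ k"])
      (use steps c in \<open>simp_all add: D_def summable_geometric\<close>)
  then have "(\<lambda>n. z 0 + (\<Sum>k<n. D k)) \<longlonglongrightarrow> z 0 + suminf D"
    by (intro tendsto_add tendsto_const summable_LIMSEQ)
  moreover have "z 0 + (\<Sum>k<n. D k) = z n" for n
    by (simp add: D_def sum_lessThan_telescope)
  ultimately have lim: "z \<longlonglongrightarrow> z 0 + suminf D" by simp
  have tail: "norm (z (k + m) - z k) \<le> a / (1 - c) * c ^ k * (1 - c ^ m)" for k m
  proof (induction m)
    case (Suc m)
    have "norm (z (k + Suc m) - z k) \<le> norm (z (Suc (k + m)) - z (k + m)) + norm (z (k + m) - z k)"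
      using norm_triangle_ineq[of "z (Suc (k + m)) - z (k + m)" "z (k + m) - z k"] by simp
    also have "\<dots> \<le> a * c ^ (k + m) + a / (1 - c) * c ^ k * (1 - c ^ m)"
      using steps[of "k + m"] Suc.IH by simp
    also have "\<dots> = a / (1 - c) * c ^ k * (1 - c ^ Suc m)"
      using c by (simp add: field_simps power_add)
    finally show ?case .
  qed simp
  have "0 \<le> a" using order_trans[OF norm_ge_zero steps[of 0]] by simp
  have "norm (z k - (z 0 + suminf D)) \<le> a / (1 - c) * c ^ k" for k
  proof -
    have "(\<lambda>m. norm (z (k + m) - z k)) \<longlonglongrightarrow> norm (z 0 + suminf D - z k)"
      using LIMSEQ_ignore_initial_segment[OF lim, of k] by (intro tendsto_intros) (simp add: add.commute)
    moreover have "norm (z (k + m) - z k) \<le> a / (1 - c) * c ^ k" for m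
    proof -
      have "a / (1 - c) * c ^ k * (1 - c ^ m) \<le> a / (1 - c) * c ^ k"
        using \<open>0 \<le> a\<close> c by (intro mult_left_le) auto
      then show ?thesis using tail[of k m] by linarith
    qed
    ultimately show ?thesis
      by (simp add: LIMSEQ_le_const2 norm_minus_commute)
  qed
  then show ?thesis using that lim by blast
qed

lemma converges_linearlyI:
  assumes rate: "\<And>k. norm (z k - zhat) \<le> B * c ^ k" and c: "0 \<le> c" "c < 1"
  shows "converges_linearly z zhat"
  unfolding converges_linearly_def
proof (intro exI conjI allI)
  have "0 \<le> B" using order_trans[OF norm_ge_zero rate[of 0]] by simp
  show "0 < max c (1 / 2)" "max c (1 / 2) < 1" "0 < B + 1" using c \<open>0 \<le> B\<close> by auto
  fix k
  have "c ^ k \<le> max c (1 / 2) ^ k" using c by (intro power_mono) auto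
  then have "norm (z k - zhat) \<le> B * max c (1 / 2) ^ k"
    using rate[of k] mult_left_mono[OF _ \<open>0 \<le> B\<close>] order_trans by blast
  also have "\<dots> < (B + 1) * max c (1 / 2) ^ k" by simp
  finally show "norm (z k - zhat) < (B + 1) * max c (1 / 2) ^ k" .
qed

lemma alternating_iterates_geometric:
  fixes M Q :: "'a::euclidean_space set" and z :: "nat \<Rightarrow> 'a"
  assumes step: "\<And>w w1. w \<in> Q \<Longrightarrow> norm (w - xbar) < \<delta> \<Longrightarrow> w1 \<in> proj_set Q (\<Phi> w) \<Longrightarrow>
      infdist w1 M \<le> c * infdist w M \<and> norm (w1 - w) \<le> L * infdist w M"
    and c: "0 \<le> c" "c < 1" and L: "0 \<le> L" and xbar: "xbar \<in> M"
    and z0: "z 0 \<in> Q" "(1 + L / (1 - c)) * norm (z 0 - xbar) < \<delta>"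
    and iter: "\<And>k. z (Suc k) \<in> proj_set Q (\<Phi> (z k))"
  shows "z k \<in> Q \<and> infdist (z k) M \<le> c ^ k * infdist (z 0) M
    \<and> norm (z (Suc k) - z k) \<le> L * infdist (z 0) M * c ^ k"
proof -
  define d0 where "d0 = infdist (z 0) M"
  \<comment> \<open>B bounds the total path length \<Sum>k. L c^k d0, so all iterates stay in the ball of radius \<delta>.\<close>
  define B where "B = L * d0 / (1 - c)"
  have "0 \<le> d0" by (simp add: d0_def infdist_nonneg)
  have "d0 \<le> norm (z 0 - xbar)" using infdist_le[OF xbar] by (simp add: d0_def dist_norm)
  then have "B \<le> L / (1 - c) * norm (z 0 - xbar)"
    using c L by (simp add: B_def divide_right_mono mult_left_mono)
  then have radius: "norm (z 0 - xbar) + B < \<delta>" using z0(2) by (simp add: algebra_simps)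
  have "0 \<le> B" using c L \<open>0 \<le> d0\<close> by (simp add: B_def)
  have next_step: "infdist (z (Suc k)) M \<le> c * infdist (z k) M \<and> norm (z (Suc k) - z k) \<le> L * infdist (z k) M"
    if "z k \<in> Q" "norm (z k - z 0) \<le> B" for k
  proof (rule step[OF that(1) _ iter])
    show "norm (z k - xbar) < \<delta>"
      using norm_triangle_ineq[of "z k - z 0" "z 0 - xbar"] that(2) radius by simp
  qed
  have inv: "z k \<in> Q \<and> norm (z k - z 0) \<le> B * (1 - c ^ k) \<and> infdist (z k) M \<le> c ^ k * d0" for k
  proof (induction k)
    case 0
    then show ?case using z0(1) by (simp add: d0_def)
  next
    case (Suc k)
    have "B * (1 - c ^ k) \<le> B" using \<open>0 \<le> B\<close> c by (simp add: mult_left_le)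
    with Suc.IH have "norm (z (Suc k) - z k) \<le> L * (c ^ k * d0)"
      and "infdist (z (Suc k)) M \<le> c * (c ^ k * d0)"
      using next_step[of k] L c by (auto intro: order_trans mult_left_mono)
    moreover have "norm (z (Suc k) - z 0) \<le> norm (z (Suc k) - z k) + norm (z k - z 0)"
      using norm_triangle_ineq[of "z (Suc k) - z k" "z k - z 0"] by simp
    moreover have "L * (c ^ k * d0) + B * (1 - c ^ k) = B * (1 - c ^ Suc k)"
      using c by (simp add: B_def field_simps)
    ultimately show ?case
      using Suc.IH iter[of k] proj_set_subset by (auto simp: mult.assoc)
  qed
  have "B * (1 - c ^ k) \<le> B" using \<open>0 \<le> B\<close> c by (simp add: mult_left_le)
  then show ?thesis
    using inv[of k] next_step[of k] L mult_left_mono[of "infdist (z k) M" "c ^ k * d0" L]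
    by (auto simp: d0_def mult.commute mult.left_commute)
qed

theorem mainTheorem1:
  fixes M Q :: "'a::euclidean_space set" and xbar :: 'a and \<Phi> :: "'a \<Rightarrow> 'a"
  assumes "closed M" "closed Q" "M \<noteq> {}" "Q \<noteq> {}" "xbar \<in> M \<inter> Q"
    and "intersects_separably Q M xbar"
    and "prox_regular_at Q xbar"
    and "inexact_projection \<Phi> M xbar"
  shows "\<exists>\<epsilon>>0. \<forall>z :: nat \<Rightarrow> 'a.
           z 0 \<in> Q \<and> norm (z 0 - xbar) < \<epsilon> \<and> (\<forall>k. z (Suc k) \<in> proj_set Q (\<Phi> (z k)))
           \<longrightarrow> (\<exists>zhat \<in> M \<inter> Q. converges_linearly z zhat)"
proof -
  obtain \<delta> c where "0 < \<delta>" and c: "0 \<le> c" "c < 1" and step: "\<And>w w1. w \<in> Q \<Longrightarrow>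
      norm (w - xbar) < \<delta> \<Longrightarrow> w1 \<in> proj_set Q (\<Phi> w) \<Longrightarrow>
      infdist w1 M \<le> c * infdist w M \<and> norm (w1 - w) \<le> 2 * infdist w M"
    using inexact_alternating_step[OF assms(1,3,2,6,7,8)] by blast
  define \<epsilon> where "\<epsilon> = \<delta> / (1 + 2 / (1 - c))"
  have "\<exists>zhat \<in> M \<inter> Q. converges_linearly z zhat"
    if z0: "z 0 \<in> Q" "norm (z 0 - xbar) < \<epsilon>" and iter: "\<forall>k. z (Suc k) \<in> proj_set Q (\<Phi> (z k))"
    for z :: "nat \<Rightarrow> 'a"
  proof -
    define d0 where "d0 = infdist (z 0) M"
    have "(1 + 2 / (1 - c)) * norm (z 0 - xbar) < \<delta>"
      using z0(2) c by (simp add: \<epsilon>_def field_simps)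
    then have it: "z k \<in> Q \<and> infdist (z k) M \<le> c ^ k * d0 \<and> norm (z (Suc k) - z k) \<le> 2 * d0 * c ^ k" for k
      using alternating_iterates_geometric[OF step c _ _ z0(1) _ iter[rule_format]] assms(5)
      by (simp add: d0_def)
    then obtain zhat where lim: "z \<longlonglongrightarrow> zhat" and rate: "\<And>k. norm (z k - zhat) \<le> 2 * d0 / (1 - c) * c ^ k"
      using geometric_steps_converge[of z "2 * d0" c] c by blast
    have "zhat \<in> Q" using closed_sequentially[OF assms(2) _ lim] it by blast
    have "\<forall>k. norm (infdist (z k) M) \<le> c ^ k * d0"
      using it by (simp add: infdist_nonneg)
    moreover have "(\<lambda>k. c ^ k * d0) \<longlonglongrightarrow> 0"
      using c by (intro tendsto_mult_left_zero LIMSEQ_power_zero) simp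
    ultimately have "(\<lambda>k. infdist (z k) M) \<longlonglongrightarrow> 0"
      by (rule Lim_null_comparison[OF always_eventually])
    then have "zhat \<in> M"
      using LIMSEQ_unique[OF tendsto_infdist[OF lim]] in_closed_iff_infdist_zero[OF assms(1,3)] by blast
    then show ?thesis using \<open>zhat \<in> Q\<close> converges_linearlyI[OF rate c] by blast
  qed
  moreover have "0 < \<epsilon>" using \<open>0 < \<delta>\<close> c by (simp add: \<epsilon>_def add_pos_nonneg)
  ultimately show ?thesis by blast
qed

end
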